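(* Let $T$ be a tree with $\sigma(T)=\tau_{\mathrm{ind}}(T)$, and let $I\subseteq V(T)$ be a minimum independent vertex cover of $T$. Suppose $T$ has a critical edge. Then there exists a pendant edge $e^{\ast}\in T$ whose leaf endpoint is contained in $I$ such that $\sigma(T\setminus e^{\ast})\le\sigma(T)-1$.
   Context: For a graph $F$, $|F|$ is its number of edges and $F-I$ the subgraph induced on $V(F)\setminus I$. The crosscut number is $\sigma(F)=\min\{|I|+|F-I| : I\text{ independent in }F\}$. For bipartite $F$, $\tau_{\mathrm{ind}}(F)$ is the minimum size of $S\subseteq V(F)$ with $|S\cap e|=1$ for every edge $e$; a minimum independent vertex cover is an independent set meeting every edge, of minimum size among such sets. For an edge $e$, $T\setminus e$ is $T$ with edge $e$ deleted (vertices kept); $e$ is critical if $\sigma(T\setminus e)\le\sigma(T)-1$. A pendant edge is an edge with an endpoint of degree $1$ (a leaf). *)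

theory Defs
  imports Main
begin

definition graph :: "'a set \<Rightarrow> 'a set set \<Rightarrow> bool" where
  "graph V E \<longleftrightarrow> finite V \<and> (\<forall>e\<in>E. \<exists>u v. e = {u, v} \<and> u \<noteq> v \<and> u \<in> V \<and> v \<in> V)"

definition connected_graph :: "'a set \<Rightarrow> 'a set set \<Rightarrow> bool" where
  "connected_graph V E \<longleftrightarrow> V \<noteq> {} \<and>
     (\<forall>u\<in>V. \<forall>v\<in>V. (u, v) \<in> {(x, y). {x, y} \<in> E}\<^sup>*)"

definition has_cycle :: "'a set \<Rightarrow> 'a set set \<Rightarrow> bool" where
  "has_cycle V E \<longleftrightarrow> (\<exists>xs. 3 \<le> length xs \<and> distinct xs \<and> set xs \<subseteq> V \<and>
     (\<forall>i < length xs. {xs ! i, xs ! ((i + 1) mod length xs)} \<in> E))"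

definition tree :: "'a set \<Rightarrow> 'a set set \<Rightarrow> bool" where
  "tree V E \<longleftrightarrow> graph V E \<and> connected_graph V E \<and> \<not> has_cycle V E"

definition degree :: "'a set set \<Rightarrow> 'a \<Rightarrow> nat" where
  "degree E v = card {e \<in> E. v \<in> e}"

definition independent :: "'a set \<Rightarrow> 'a set set \<Rightarrow> 'a set \<Rightarrow> bool" where
  "independent V E I \<longleftrightarrow> I \<subseteq> V \<and> (\<forall>e\<in>E. \<not> e \<subseteq> I)"

text \<open>Crosscut number: min over independent I of |I| + |F - I|, where F - I is the
  subgraph induced on V - I, whose edges are exactly the edges disjoint from I.\<close>
definition sigma :: "'a set \<Rightarrow> 'a set set \<Rightarrow> nat" where
  "sigma V E = Min {card I + card {e \<in> E. e \<inter> I = {}} | I. independent V E I}"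

definition tau_ind :: "'a set \<Rightarrow> 'a set set \<Rightarrow> nat" where
  "tau_ind V E = Min {card S | S. S \<subseteq> V \<and> (\<forall>e\<in>E. card (S \<inter> e) = 1)}"

definition min_indep_vertex_cover :: "'a set \<Rightarrow> 'a set set \<Rightarrow> 'a set \<Rightarrow> bool" where
  "min_indep_vertex_cover V E I \<longleftrightarrow>
     independent V E I \<and> (\<forall>e\<in>E. e \<inter> I \<noteq> {}) \<and>
     (\<forall>J. independent V E J \<and> (\<forall>e\<in>E. e \<inter> J \<noteq> {}) \<longrightarrow> card I \<le> card J)"

text \<open>Edge e is critical: sigma(T minus e) <= sigma(T) - 1 (stated without nat truncation).\<close>
definition critical_edge :: "'a set \<Rightarrow> 'a set set \<Rightarrow> 'a set \<Rightarrow> bool" where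
  "critical_edge V E e \<longleftrightarrow> e \<in> E \<and> sigma V (E - {e}) + 1 \<le> sigma V E"

end

theory Submission
  imports Defs
begin

text \<open>
  An independent vertex cover meets every edge exactly once, so tau_ind T = |I| = sigma T.
  Suppose no vertex of I is a leaf; by minimality no vertex of I is isolated either, so all of
  them have degree at least 2. Fix an edge e and an independent set J, and let S = I - J.
  As S is independent, it meets at least 2|S| - 1 edges of T - e; these form a forest, so they
  span more than 2|S| - 1 vertices, i.e. S has at least |S| neighbours. The neighbours lie
  outside I, and each one outside J yields its own edge of T - e missing J.
  Hence |J| + |(T - e) - J| \<ge> |I|, so sigma (T - e) \<ge> sigma T and no edge is critical.
  Therefore some leaf u \<in> I exists, and after deleting its pendant edge the set I - {u} still
  meets every remaining edge, so sigma drops by at least one.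
\<close>

lemma graph_subset: "graph V E \<Longrightarrow> F \<subseteq> E \<Longrightarrow> graph V F"
  unfolding graph_def by blast

lemma graph_finite_vertices: "graph V E \<Longrightarrow> finite V"
  unfolding graph_def by simp

lemma graph_Union_edges_subset: "graph V E \<Longrightarrow> \<Union>E \<subseteq> V"
  unfolding graph_def by fastforce

lemma graph_finite_edges:
  assumes "graph V E"
  shows "finite E"
proof (rule finite_subset)
  show "E \<subseteq> Pow V" using graph_Union_edges_subset[OF assms] by blast
  show "finite (Pow V)" using graph_finite_vertices[OF assms] by simp
qed

lemma graph_edgeE:
  assumes "graph V E" "f \<in> E"
  obtains u w where "f = {u, w}" "u \<noteq> w" "u \<in> V" "w \<in> V"
  using assms unfolding graph_def by blast

lemma graph_edge_at:
  assumes "graph V E" "f \<in> E" "u \<in> f"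
  obtains w where "f = {u, w}" "u \<noteq> w" "u \<in> V" "w \<in> V"
proof -
  obtain a b where "f = {a, b}" "a \<noteq> b" "a \<in> V" "b \<in> V"
    using assms(1,2) by (rule graph_edgeE)
  with assms(3) show thesis using that by (cases "u = a") (auto simp: insert_commute)
qed

lemma has_cycle_mono: "has_cycle V F \<Longrightarrow> F \<subseteq> E \<Longrightarrow> has_cycle V E"
  unfolding has_cycle_def by blast

definition is_path :: "'a set set \<Rightarrow> 'a list \<Rightarrow> bool" where
  "is_path F xs \<longleftrightarrow> distinct xs \<and> (\<forall>i. Suc i < length xs \<longrightarrow> {xs ! i, xs ! Suc i} \<in> F)"

lemma is_path_Cons:
  assumes "is_path F xs" "xs \<noteq> []" "z \<notin> set xs" "{z, hd xs} \<in> F"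
  shows "is_path F (z # xs)"
  unfolding is_path_def
proof (intro conjI allI impI)
  show "distinct (z # xs)" using assms(1,3) unfolding is_path_def by simp
  fix i assume "Suc i < length (z # xs)"
  then show "{(z # xs) ! i, (z # xs) ! Suc i} \<in> F"
    using assms(1,2,4) unfolding is_path_def by (cases i) (auto simp: hd_conv_nth)
qed

lemma is_path_chord_has_cycle:
  assumes "is_path F xs" "set xs \<subseteq> V" "2 \<le> i" "i < length xs" "{xs ! i, xs ! 0} \<in> F"
  shows "has_cycle V F"
  unfolding has_cycle_def
proof (intro exI[of _ "take (Suc i) xs"] conjI allI impI)
  let ?ys = "take (Suc i) xs"
  have len: "length ?ys = Suc i" using assms(4) by simp
  show "3 \<le> length ?ys" using len assms(3) by simp
  show "distinct ?ys" using assms(1) unfolding is_path_def by simp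
  show "set ?ys \<subseteq> V" using assms(2) by (meson order.trans set_take_subset)
  fix j assume "j < length ?ys"
  then consider "j = i" | "j < i" using len by linarith
  then show "{?ys ! j, ?ys ! ((j + 1) mod length ?ys)} \<in> F"
  proof cases
    case 1
    then show ?thesis using assms(5) len by simp
  next
    case 2
    then show ?thesis using assms(1,4) len unfolding is_path_def by simp
  qed
qed

lemma longest_path_exists:
  assumes "graph V F" "F \<noteq> {}"
  obtains xs where "is_path F xs" "set xs \<subseteq> V" "2 \<le> length xs"
    "\<And>ys. is_path F ys \<Longrightarrow> set ys \<subseteq> V \<Longrightarrow> length ys \<le> length xs"
proof -
  define P where "P n \<longleftrightarrow> (\<exists>xs. is_path F xs \<and> set xs \<subseteq> V \<and> length xs = n \<and> 2 \<le> n)" for n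
  obtain f where "f \<in> F" using assms(2) by blast
  then obtain a b where ab: "f = {a, b}" "a \<noteq> b" "a \<in> V" "b \<in> V"
    using assms(1) by (blast elim: graph_edgeE)
  with \<open>f \<in> F\<close> have "is_path F [a, b]" by (auto simp: is_path_def less_Suc_eq)
  then have "P 2" unfolding P_def using ab by (intro exI[of _ "[a, b]"]) auto
  moreover have "\<forall>n. P n \<longrightarrow> n \<le> card V"
  proof (intro allI impI)
    fix n assume "P n"
    then obtain xs where "distinct xs" "set xs \<subseteq> V" "length xs = n"
      unfolding P_def is_path_def by blast
    with graph_finite_vertices[OF assms(1)] show "n \<le> card V" by (metis card_mono distinct_card)
  qed
  ultimately have "\<exists>n. P n \<and> (\<forall>m. P m \<longrightarrow> m \<le> n)"
    by (rule Nat.ex_has_greatest_nat)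
  then obtain n where "P n" and greatest: "\<And>m. P m \<Longrightarrow> m \<le> n"
    by blast
  then obtain xs where xs: "is_path F xs" "set xs \<subseteq> V" "length xs = n" "2 \<le> n"
    unfolding P_def by blast
  have longest: "length ys \<le> length xs" if "is_path F ys" "set ys \<subseteq> V" for ys
  proof (cases "2 \<le> length ys")
    case True
    then have "P (length ys)" using that unfolding P_def by blast
    then show ?thesis using greatest xs(3) by simp
  next
    case False
    then show ?thesis using xs(3,4) by simp
  qed
  show thesis by (rule that[OF xs(1,2) _ longest]) (use xs(3,4) in simp)
qed

lemma forest_has_leaf:
  assumes "graph V F" "\<not> has_cycle V F" "F \<noteq> {}"
  obtains v f where "{g \<in> F. v \<in> g} = {f}"
proof -
  obtain xs where xs: "is_path F xs" "set xs \<subseteq> V" "2 \<le> length xs"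
    and longest: "\<And>ys. is_path F ys \<Longrightarrow> set ys \<subseteq> V \<Longrightarrow> length ys \<le> length xs"
    using longest_path_exists[OF assms(1,3)] by blast
  define f where "f = {xs ! 0, xs ! 1}"
  have fF: "f \<in> F" using xs unfolding is_path_def f_def by auto
  have leaf: "g = f" if g: "g \<in> F" "xs ! 0 \<in> g" for g
  proof -
    obtain z where z: "g = {xs ! 0, z}" "z \<noteq> xs ! 0" "z \<in> V"
      using graph_edge_at[OF assms(1) g] by blast
    show "g = f"
    proof (cases "z \<in> set xs")
      case False
      have "xs \<noteq> []" using xs(3) by auto
      then have "is_path F (z # xs)"
        using xs(1) g z False by (intro is_path_Cons) (auto simp: hd_conv_nth insert_commute)
      then show ?thesis using longest[of "z # xs"] xs(2) z(3) by simp
    next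
      case True
      then obtain i where i: "i < length xs" "xs ! i = z" by (metis in_set_conv_nth)
      moreover have "i \<noteq> 0" using i(2) z(2) by metis
      ultimately consider "i = 1" | "2 \<le> i" by linarith
      then show ?thesis
      proof cases
        case 1
        then show ?thesis using z i unfolding f_def by simp
      next
        case 2
        then have "has_cycle V F"
          using is_path_chord_has_cycle[OF xs(1,2)] i g z by (simp add: insert_commute)
        then show ?thesis using assms(2) by blast
      qed
    qed
  qed
  have "xs ! 0 \<in> f" unfolding f_def by simp
  with fF leaf have "{g \<in> F. xs ! 0 \<in> g} = {f}" by blast
  then show thesis by (rule that)
qed

lemma forest_card_edges_less:
  assumes "graph V F" "\<not> has_cycle V F" "F \<noteq> {}"
  shows "card F < card (\<Union>F)"
  using assms
proof (induction "card F" arbitrary: F rule: less_induct)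
  case less
  obtain v f where "{g \<in> F. v \<in> g} = {f}"
    by (rule forest_has_leaf[OF less.prems])
  then have vf: "f \<in> F" "v \<in> f" "F - {f} \<subseteq> F - {g. v \<in> g}" by auto
  have finF: "finite F" using graph_finite_edges[OF less.prems(1)] .
  have finU: "finite (\<Union>F)"
    using graph_Union_edges_subset[OF less.prems(1)] graph_finite_vertices[OF less.prems(1)]
    by (rule finite_subset)
  show ?case
  proof (cases "F - {f} = {}")
    case True
    then have "F = {f}" using vf(1) by blast
    moreover obtain w where "f = {v, w}" "v \<noteq> w"
      using graph_edge_at[OF less.prems(1) vf(1,2)] by blast
    ultimately show ?thesis by simp
  next
    case False
    have "graph V (F - {f})" "\<not> has_cycle V (F - {f})"
      using less.prems(1,2) graph_subset has_cycle_mono by blast+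
    moreover have "card (F - {f}) < card F" using finF vf(1) by (rule card_Diff1_less)
    ultimately have "card (F - {f}) < card (\<Union>(F - {f}))"
      using less.hyps False by blast
    also have "\<dots> \<le> card (\<Union>F - {v})"
      using vf(3) finU by (intro card_mono) auto
    also have "\<dots> = card (\<Union>F) - 1"
      using vf(1,2) finU by (intro card_Diff_singleton) blast+
    finally show ?thesis using finF vf(1) by (simp add: card_Diff_singleton)
  qed
qed

lemma sum_degree_independent:
  assumes "graph V E" "finite S" "\<forall>f\<in>E. \<not> f \<subseteq> S"
  shows "(\<Sum>s\<in>S. degree E s) = card {f \<in> E. f \<inter> S \<noteq> {}}"
proof -
  have "{f \<in> E. s \<in> f} \<inter> {f \<in> E. t \<in> f} = {}" if "s \<in> S" "t \<in> S" "s \<noteq> t" for s t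
  proof (rule ccontr)
    assume "{f \<in> E. s \<in> f} \<inter> {f \<in> E. t \<in> f} \<noteq> {}"
    then obtain f where f: "f \<in> E" "s \<in> f" "t \<in> f" by blast
    obtain w where "f = {s, w}" using graph_edge_at[OF assms(1) f(1,2)] by blast
    with f(3) that have "f \<subseteq> S" by auto
    with assms(3) f(1) show False by blast
  qed
  then have "card (\<Union>s\<in>S. {f \<in> E. s \<in> f}) = (\<Sum>s\<in>S. card {f \<in> E. s \<in> f})"
    using assms(2) graph_finite_edges[OF assms(1)] by (intro card_UN_disjoint) auto
  moreover have "(\<Union>s\<in>S. {f \<in> E. s \<in> f}) = {f \<in> E. f \<inter> S \<noteq> {}}" by blast
  ultimately show ?thesis unfolding degree_def by simp
qed

definition neighbourhood :: "'a set set \<Rightarrow> 'a set \<Rightarrow> 'a set" where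
  "neighbourhood E S = \<Union>{f \<in> E. f \<inter> S \<noteq> {}} - S"

lemma neighbourhoodE:
  assumes "graph V E" "b \<in> neighbourhood E S"
  obtains s where "s \<in> S" "{s, b} \<in> E"
proof -
  obtain f s where f: "f \<in> E" "b \<in> f" "s \<in> f" "s \<in> S" "b \<notin> S"
    using assms(2) unfolding neighbourhood_def by blast
  obtain w where "f = {s, w}" using graph_edge_at[OF assms(1) f(1,3)] by blast
  with f have "f = {s, b}" by auto
  with f show thesis by (intro that) simp_all
qed

lemma finite_neighbourhood:
  assumes "graph V E"
  shows "finite (neighbourhood E S)"
proof (rule finite_subset)
  show "neighbourhood E S \<subseteq> V"
    using graph_Union_edges_subset[OF assms] unfolding neighbourhood_def by blast
  show "finite V" using assms by (rule graph_finite_vertices)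
qed

lemma card_neighbourhood_le:
  assumes "graph V E"
  shows "card (neighbourhood E S) \<le> card {f \<in> E. f \<inter> S \<noteq> {}}"
proof -
  let ?F = "{f \<in> E. f \<inter> S \<noteq> {}}"
  have "card (neighbourhood E S) = card (\<Union>f\<in>?F. f - S)"
    unfolding neighbourhood_def by (rule arg_cong[where f = card]) blast
  also have "\<dots> \<le> (\<Sum>f\<in>?F. card (f - S))"
    using graph_finite_edges[OF assms] by (intro card_UN_le) simp
  also have "\<dots> \<le> (\<Sum>f\<in>?F. 1)"
  proof (rule sum_mono)
    fix f assume "f \<in> ?F"
    then obtain s where s: "f \<in> E" "s \<in> f" "s \<in> S" by blast
    then obtain w where "f = {s, w}" using graph_edge_at[OF assms] by blast
    then have "f - S \<subseteq> {w}" using s(3) by blast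
    then show "card (f - S) \<le> 1" using card_mono[of "{w}"] by fastforce
  qed
  finally show ?thesis by simp
qed

lemma card_le_card_neighbourhood_delete_edge:
  assumes "graph V E" "\<not> has_cycle V E" "S \<subseteq> V" "\<forall>f\<in>E. \<not> f \<subseteq> S"
    and "\<forall>s\<in>S. 2 \<le> degree E s"
  shows "card S \<le> card (neighbourhood (E - {e}) S)"
proof -
  define F where "F = {f \<in> E - {e}. f \<inter> S \<noteq> {}}"
  have finS: "finite S"
    using graph_finite_vertices[OF assms(1)] assms(3) by (rule finite_subset[rotated])
  have finF: "finite F" using graph_finite_edges[OF assms(1)] unfolding F_def by simp
  have "2 * card S \<le> (\<Sum>s\<in>S. degree E s)"
    using sum_mono[of S "\<lambda>_. 2" "degree E"] assms(5) by simp
  also have "\<dots> = card {f \<in> E. f \<inter> S \<noteq> {}}"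
    using sum_degree_independent[OF assms(1) finS assms(4)] .
  also have "\<dots> \<le> card (insert e F)"
    using finF by (intro card_mono) (auto simp: F_def)
  also have "\<dots> \<le> card F + 1"
    using finF by (simp add: card_insert_if)
  finally have deg: "2 * card S \<le> card F + 1" .
  show ?thesis
  proof (cases "F = {}")
    case True
    then show ?thesis using deg by simp
  next
    case False
    have "F \<subseteq> E" unfolding F_def by blast
    then have "graph V F" "\<not> has_cycle V F"
      using graph_subset[OF assms(1)] has_cycle_mono[of V F E] assms(2) by auto
    then have "card F < card (\<Union>F)" using False by (rule forest_card_edges_less)
    also have "\<dots> \<le> card (S \<union> neighbourhood (E - {e}) S)"
    proof (rule card_mono)
      show "finite (S \<union> neighbourhood (E - {e}) S)"
        using finS finite_neighbourhood[OF graph_subset[OF assms(1) Diff_subset]] by simp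
      show "\<Union>F \<subseteq> S \<union> neighbourhood (E - {e}) S"
        unfolding neighbourhood_def F_def by blast
    qed
    also have "\<dots> \<le> card S + card (neighbourhood (E - {e}) S)"
      by (rule card_Un_le)
    finally show ?thesis using deg by linarith
  qed
qed

lemma finite_independent: "graph V E \<Longrightarrow> independent V E I \<Longrightarrow> finite I"
  unfolding independent_def using graph_finite_vertices finite_subset by blast

lemma card_le_crosscut_delete_edge:
  assumes "graph V E" "\<not> has_cycle V E" "independent V E I"
    and "\<forall>s\<in>I. 2 \<le> degree E s" "J \<subseteq> V"
  shows "card I \<le> card J + card {f \<in> E - {e}. f \<inter> J = {}}"
proof -
  define S where "S = I - J"
  define N where "N = neighbourhood (E - {e}) S"
  define T where "T = {f \<in> E - {e}. f \<inter> J = {}}"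
  have graph': "graph V (E - {e})" using assms(1) by (rule graph_subset) blast
  have IV: "I \<subseteq> V" and indep: "\<forall>f\<in>E. \<not> f \<subseteq> I"
    using assms(3) unfolding independent_def by auto
  have finV: "finite V" using assms(1) by (rule graph_finite_vertices)
  have finI: "finite I" using assms(1,3) by (rule finite_independent)
  have finJ: "finite J" using finV assms(5) by (rule finite_subset[rotated])
  have graphT: "graph V T" using assms(1) by (rule graph_subset) (auto simp: T_def)
  have finN: "finite N" unfolding N_def using graph' by (rule finite_neighbourhood)
  have "S \<subseteq> I" unfolding S_def by blast
  then have "S \<subseteq> V" "\<forall>f\<in>E. \<not> f \<subseteq> S" "\<forall>s\<in>S. 2 \<le> degree E s"
    using IV indep assms(4) by blast+
  then have "card S \<le> card N"
    unfolding N_def by (rule card_le_card_neighbourhood_delete_edge[OF assms(1,2)])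
  have NI: "N \<inter> I = {}"
  proof -
    have "b \<notin> I" if "b \<in> N" for b
    proof
      assume "b \<in> I"
      obtain s where "s \<in> S" "{s, b} \<in> E - {e}"
        using neighbourhoodE[OF graph' \<open>b \<in> N\<close>[unfolded N_def]] .
      moreover from \<open>s \<in> S\<close> \<open>b \<in> I\<close> have "{s, b} \<subseteq> I" unfolding S_def by blast
      ultimately show False using indep by blast
    qed
    then show ?thesis by blast
  qed
  have "N - J \<subseteq> neighbourhood T S"
  proof
    fix b assume b: "b \<in> N - J"
    obtain s where "s \<in> S" "{s, b} \<in> E - {e}"
      using b neighbourhoodE[OF graph'] unfolding N_def by blast
    moreover have "b \<notin> S" using b unfolding N_def neighbourhood_def by blast
    ultimately show "b \<in> neighbourhood T S"
      using b unfolding T_def S_def neighbourhood_def by blast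
  qed
  then have "card (N - J) \<le> card (neighbourhood T S)"
    using finite_neighbourhood[OF graphT] by (rule card_mono[rotated])
  also have "\<dots> \<le> card {f \<in> T. f \<inter> S \<noteq> {}}" using graphT by (rule card_neighbourhood_le)
  also have "\<dots> \<le> card T" using graph_finite_edges[OF graphT] by (intro card_mono) auto
  finally have "card (N - J) \<le> card T" .
  moreover have "card (I \<inter> J) + card (N \<inter> J) \<le> card J"
  proof -
    have "card (I \<inter> J) + card (N \<inter> J) = card ((I \<inter> J) \<union> (N \<inter> J))"
      using NI finJ by (subst card_Un_disjoint) auto
    also have "\<dots> \<le> card J" using finJ by (intro card_mono) auto
    finally show ?thesis .
  qed
  moreover have "card I = card (I \<inter> J) + card S"
    unfolding S_def using finI by (rule card_Int_Diff)
  moreover have "card N = card (N \<inter> J) + card (N - J)"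
    using finN by (rule card_Int_Diff)
  ultimately show ?thesis using \<open>card S \<le> card N\<close> unfolding T_def by linarith
qed

lemma finite_crosscut_values:
  assumes "finite V"
  shows "finite {card I + card {e \<in> E. e \<inter> I = {}} | I. independent V E I}"
proof (rule finite_subset)
  show "{card I + card {e \<in> E. e \<inter> I = {}} | I. independent V E I}
      \<subseteq> (\<lambda>I. card I + card {e \<in> E. e \<inter> I = {}}) ` Pow V"
    unfolding independent_def by blast
  show "finite ((\<lambda>I. card I + card {e \<in> E. e \<inter> I = {}}) ` Pow V)"
    using assms by simp
qed

lemma sigma_le:
  assumes "finite V" "independent V E I"
  shows "sigma V E \<le> card I + card {e \<in> E. e \<inter> I = {}}"
proof -
  have "card I + card {e \<in> E. e \<inter> I = {}} \<in> {card J + card {e \<in> E. e \<inter> J = {}} | J. independent V E J}"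
    using assms(2) by blast
  with finite_crosscut_values[OF assms(1)] show ?thesis unfolding sigma_def by (rule Min_le)
qed

lemma sigma_geI:
  assumes "graph V E" "\<And>I. independent V E I \<Longrightarrow> k \<le> card I + card {e \<in> E. e \<inter> I = {}}"
  shows "k \<le> sigma V E"
proof -
  have "independent V E {}" unfolding independent_def using assms(1) by (blast elim: graph_edgeE)
  moreover have "finite V" using assms(1) by (rule graph_finite_vertices)
  ultimately show ?thesis
    unfolding sigma_def using assms(2) finite_crosscut_values by (subst Min_ge_iff) auto
qed

lemma card_le_sigma_delete_edge:
  assumes "graph V E" "\<not> has_cycle V E" "independent V E I" "\<forall>s\<in>I. 2 \<le> degree E s"
  shows "card I \<le> sigma V (E - {e})"
proof (rule sigma_geI)
  show "graph V (E - {e})" using assms(1) by (rule graph_subset) blast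
  fix J assume "independent V (E - {e}) J"
  then have "J \<subseteq> V" unfolding independent_def by blast
  then show "card I \<le> card J + card {f \<in> E - {e}. f \<inter> J = {}}"
    by (rule card_le_crosscut_delete_edge[OF assms])
qed

lemma card_Int_edge_eq_1_iff:
  assumes "graph V E" "f \<in> E"
  shows "card (S \<inter> f) = 1 \<longleftrightarrow> \<not> f \<subseteq> S \<and> f \<inter> S \<noteq> {}"
proof -
  obtain u w where "f = {u, w}" "u \<noteq> w" using assms by (rule graph_edgeE)
  then show ?thesis by (cases "u \<in> S"; cases "w \<in> S") auto
qed

lemma min_indep_vertex_coverD:
  assumes "min_indep_vertex_cover V E I"
  shows "independent V E I" "\<forall>f\<in>E. f \<inter> I \<noteq> {}"
    and "\<And>J. independent V E J \<Longrightarrow> \<forall>f\<in>E. f \<inter> J \<noteq> {} \<Longrightarrow> card I \<le> card J"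
  using assms unfolding min_indep_vertex_cover_def by blast+

lemma tau_ind_eq_card:
  assumes "graph V E" "min_indep_vertex_cover V E I"
  shows "tau_ind V E = card I"
proof -
  let ?A = "{card S | S. S \<subseteq> V \<and> (\<forall>f\<in>E. card (S \<inter> f) = 1)}"
  have exact_iff: "S \<subseteq> V \<and> (\<forall>f\<in>E. card (S \<inter> f) = 1) \<longleftrightarrow>
      independent V E S \<and> (\<forall>f\<in>E. f \<inter> S \<noteq> {})" for S
  proof -
    have "(\<forall>f\<in>E. card (S \<inter> f) = 1) \<longleftrightarrow> (\<forall>f\<in>E. \<not> f \<subseteq> S \<and> f \<inter> S \<noteq> {})"
      by (rule ball_cong[OF refl]) (rule card_Int_edge_eq_1_iff[OF assms(1)])
    then show ?thesis unfolding independent_def by blast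
  qed
  have "?A \<subseteq> card ` Pow V" by blast
  then have "finite ?A" using graph_finite_vertices[OF assms(1)] by (simp add: finite_subset)
  moreover have "card I \<le> n" if "n \<in> ?A" for n
  proof -
    obtain S where "n = card S" "independent V E S" "\<forall>f\<in>E. f \<inter> S \<noteq> {}"
      using \<open>n \<in> ?A\<close> exact_iff by blast
    then show ?thesis using min_indep_vertex_coverD(3)[OF assms(2)] by simp
  qed
  moreover have "I \<subseteq> V \<and> (\<forall>f\<in>E. card (I \<inter> f) = 1)"
    using exact_iff min_indep_vertex_coverD(1,2)[OF assms(2)] by simp
  then have "card I \<in> ?A" by blast
  ultimately show ?thesis unfolding tau_ind_def by (rule Min_eqI)
qed

lemma min_indep_vertex_cover_degree_neq_0:
  assumes "graph V E" "min_indep_vertex_cover V E I" "s \<in> I"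
  shows "degree E s \<noteq> 0"
proof
  assume "degree E s = 0"
  then have no_edge: "{f \<in> E. s \<in> f} = {}"
    using graph_finite_edges[OF assms(1)] unfolding degree_def by simp
  have "independent V E (I - {s})"
    using min_indep_vertex_coverD(1)[OF assms(2)] unfolding independent_def by blast
  moreover have "\<forall>f\<in>E. f \<inter> (I - {s}) \<noteq> {}"
    using min_indep_vertex_coverD(2)[OF assms(2)] no_edge by blast
  ultimately have "card I \<le> card (I - {s})" by (rule min_indep_vertex_coverD(3)[OF assms(2)])
  moreover have "finite I"
    using assms(1) min_indep_vertex_coverD(1)[OF assms(2)] by (rule finite_independent)
  then have "card (I - {s}) < card I" using assms(3) by (rule card_Diff1_less)
  ultimately show False by simp
qed

lemma sigma_delete_pendant_edge_le:
  assumes "graph V E" "min_indep_vertex_cover V E I" "u \<in> I" "{g \<in> E. u \<in> g} = {f}"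
  shows "sigma V (E - {f}) + 1 \<le> card I"
proof -
  have "finite V" using assms(1) by (rule graph_finite_vertices)
  moreover have "independent V (E - {f}) (I - {u})"
    using min_indep_vertex_coverD(1)[OF assms(2)] unfolding independent_def by blast
  ultimately have "sigma V (E - {f}) \<le> card (I - {u}) + card {g \<in> E - {f}. g \<inter> (I - {u}) = {}}"
    by (rule sigma_le)
  also have "{g \<in> E - {f}. g \<inter> (I - {u}) = {}} = {}"
    using min_indep_vertex_coverD(2)[OF assms(2)] assms(4) by blast
  finally have "sigma V (E - {f}) \<le> card I - 1" using assms(3) by simp
  moreover have "finite I"
    using assms(1) min_indep_vertex_coverD(1)[OF assms(2)] by (rule finite_independent)
  then have "card I \<noteq> 0" using assms(3) by auto
  ultimately show ?thesis by simp
qed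

theorem proposition2p7:
  fixes V :: "'a set" and E :: "'a set set" and I :: "'a set"
  assumes "tree V E"
    and "sigma V E = tau_ind V E"
    and "min_indep_vertex_cover V E I"
    and "\<exists>e. critical_edge V E e"
  shows "\<exists>e\<in>E. \<exists>u w. e = {u, w} \<and> u \<noteq> w \<and> degree E u = 1 \<and> u \<in> I \<and>
           sigma V (E - {e}) + 1 \<le> sigma V E"
proof -
  have graph: "graph V E" and acyclic: "\<not> has_cycle V E"
    using assms(1) unfolding tree_def by auto
  have sigma: "sigma V E = card I" using assms(2) tau_ind_eq_card[OF graph assms(3)] by simp
  have "\<exists>u\<in>I. degree E u = 1"
  proof (rule ccontr)
    assume "\<not> (\<exists>u\<in>I. degree E u = 1)"
    then have "\<forall>s\<in>I. 2 \<le> degree E s"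
      using min_indep_vertex_cover_degree_neq_0[OF graph assms(3)] by fastforce
    with graph acyclic min_indep_vertex_coverD(1)[OF assms(3)]
    have lower: "card I \<le> sigma V (E - {e})" for e by (rule card_le_sigma_delete_edge)
    obtain e where "sigma V (E - {e}) + 1 \<le> card I"
      using assms(4) sigma unfolding critical_edge_def by auto
    with lower[of e] show False by simp
  qed
  then obtain u where u: "u \<in> I" "degree E u = 1" by blast
  then obtain f where f: "{g \<in> E. u \<in> g} = {f}"
    unfolding degree_def using card_1_singleton_iff by (metis One_nat_def)
  then have "f \<in> E" "u \<in> f" by auto
  then obtain w where "f = {u, w}" "u \<noteq> w" using graph_edge_at[OF graph] by metis
  moreover have "sigma V (E - {f}) + 1 \<le> sigma V E"
    using sigma_delete_pendant_edge_le[OF graph assms(3) u(1) f] sigma by simp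
  ultimately show ?thesis using \<open>f \<in> E\<close> u by blast
qed

end
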